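(* Let $0<\alpha<1$, $\sigma=1-\alpha/2$, $l,T>0$, $N,M\ge1$, $h=l/N$, $x_i=ih$, $\tau=T/M$, $t_j=j\tau$, $t_{j+\sigma}=(j+\sigma)\tau$. Let $k(x,t)\ge c_1>0$, $q(x,t)\ge0$ and $f(x,t)$ be continuous on $[0,l]\times[0,T]$, and $u_0$ a function on $[0,l]$. Set $a_i^{j+1}=k(x_{i-1/2},t_{j+\sigma})$, $d_i^{j+1}=q(x_i,t_{j+\sigma})$, $\varphi_i^{j+1}=f(x_i,t_{j+\sigma})$ with $x_{i-1/2}=(i-1/2)h$, and $$(\Lambda y)_i=\frac{a_{i+1}^{j+1}y_{i+1}-(a_{i+1}^{j+1}+a_i^{j+1})y_i+a_i^{j+1}y_{i-1}}{h^2}-d_i^{j+1}y_i .$$ Let $y$ solve $$\Delta^\alpha_{0t_{j+\sigma}}y_i=(\Lambda y^{(\sigma)})_i+\varphi_i^{j+1},\quad i=1,\dots,N-1,\ j=0,\dots,M-1,$$ $$y_0^j=y_N^j=0,\qquad y_i^0=u_0(x_i),$$ where $y^{(\sigma)}=\sigma y^{j+1}+(1-\sigma)y^j$. Then the scheme is unconditionally stable and for every $j=0,\dots,M-1$ $$\|y^{j+1}\|_0^2\le\|y^0\|_0^2+\frac{l^2T^\alpha\Gamma(1-\alpha)}{4c_1}\max_{1\le j\le M}\|\varphi^j\|_0^2 .$$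
   Context: $(y,v)=\sum_{i=1}^{N-1}y_iv_ih$, $\|y\|_0^2=(y,y)$. The discrete fractional derivative is $\Delta^\alpha_{0t_{j+\sigma}}y_i=\frac{\tau^{1-\alpha}}{\Gamma(2-\alpha)}\sum_{s=0}^{j}c_{j-s}\frac{y_i^{s+1}-y_i^s}{\tau}$ with: $a_0=\sigma^{1-\alpha}$, $a_l=(l'+\sigma)^{1-\alpha}-(l'-1+\sigma)^{1-\alpha}$ for index $l'\ge1$, $b_{l'}=\frac{1}{2-\alpha}[(l'+\sigma)^{2-\alpha}-(l'-1+\sigma)^{2-\alpha}]-\frac12[(l'+\sigma)^{1-\alpha}+(l'-1+\sigma)^{1-\alpha}]$ for $l'\ge1$; for $j=0$, $c_0=a_0$; for $j\ge1$, $c_0=a_0+b_1$, $c_s=a_s+b_{s+1}-b_s$ ($1\le s\le j-1$), $c_j=a_j-b_j$. *)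

theory Defs
  imports "HOL-Analysis.Analysis"
begin

text \<open>Coefficients of the L2-1_sigma discrete Caputo derivative.\<close>

definition frac_a :: "real \<Rightarrow> real \<Rightarrow> nat \<Rightarrow> real" where
  "frac_a \<alpha> \<sigma> n = (if n = 0 then \<sigma> powr (1 - \<alpha>)
      else (real n + \<sigma>) powr (1 - \<alpha>) - (real n - 1 + \<sigma>) powr (1 - \<alpha>))"

definition frac_b :: "real \<Rightarrow> real \<Rightarrow> nat \<Rightarrow> real" where
  "frac_b \<alpha> \<sigma> n =
     1 / (2 - \<alpha>) * ((real n + \<sigma>) powr (2 - \<alpha>) - (real n - 1 + \<sigma>) powr (2 - \<alpha>))
     - 1 / 2 * ((real n + \<sigma>) powr (1 - \<alpha>) + (real n - 1 + \<sigma>) powr (1 - \<alpha>))"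

definition frac_c :: "real \<Rightarrow> real \<Rightarrow> nat \<Rightarrow> nat \<Rightarrow> real" where
  "frac_c \<alpha> \<sigma> j s =
     (if j = 0 then frac_a \<alpha> \<sigma> 0
      else if s = 0 then frac_a \<alpha> \<sigma> 0 + frac_b \<alpha> \<sigma> 1
      else if s < j then frac_a \<alpha> \<sigma> s + frac_b \<alpha> \<sigma> (s + 1) - frac_b \<alpha> \<sigma> s
      else if s = j then frac_a \<alpha> \<sigma> j - frac_b \<alpha> \<sigma> j
      else 0)"

text \<open>Discrete fractional derivative at t_{j+sigma}; y j i is the grid value y_i^j.\<close>
definition frac_deriv :: "real \<Rightarrow> real \<Rightarrow> real \<Rightarrow> (nat \<Rightarrow> nat \<Rightarrow> real) \<Rightarrow> nat \<Rightarrow> nat \<Rightarrow> real" where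
  "frac_deriv \<alpha> \<sigma> \<tau> y j i =
     \<tau> powr (1 - \<alpha>) / Gamma (2 - \<alpha>) *
     (\<Sum>s = 0..j. frac_c \<alpha> \<sigma> j (j - s) * (y (s + 1) i - y s i) / \<tau>)"

definition grid_inner :: "nat \<Rightarrow> real \<Rightarrow> (nat \<Rightarrow> real) \<Rightarrow> (nat \<Rightarrow> real) \<Rightarrow> real" where
  "grid_inner N h y v = (\<Sum>i = 1..N - 1. y i * v i * h)"

definition grid_norm0_sq :: "nat \<Rightarrow> real \<Rightarrow> (nat \<Rightarrow> real) \<Rightarrow> real" where
  "grid_norm0_sq N h y = grid_inner N h y y"

definition Lambda_op :: "real \<Rightarrow> (nat \<Rightarrow> real) \<Rightarrow> (nat \<Rightarrow> real) \<Rightarrow> (nat \<Rightarrow> real) \<Rightarrow> nat \<Rightarrow> real" where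
  "Lambda_op h a d y i =
     (a (i + 1) * y (i + 1) - (a (i + 1) + a i) * y i + a i * y (i - 1)) / h^2 - d i * y i"

end

theory Submission
  imports Defs
begin

text \<open>
  For \<sigma> = 1 - \<alpha>/2 the coefficients c_s of the L2-1\<sigma> formula are positive, nonincreasing in s,
  satisfy (2\<sigma> - 1) c_0 \<ge> \<sigma>^2 c_1 and c_j \<ge> (1 - \<alpha>) / (2 (j + \<sigma>)^\<alpha>); all of this follows from
  the concavity of t^(1-\<alpha>) and the convexity of its derivative. These properties give Alikhanov's
  energy inequality: v^(\<sigma>) times the discrete fractional derivative of v dominates half the
  discrete fractional derivative of v^2. Taking the grid inner product of the scheme with y^(\<sigma>),
  summation by parts and the discrete Poincare inequality give (\<Lambda>w, w) \<le> -(4 c1 / l^2) |w|^2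
  for k \<ge> c1, which absorbs the forcing term: the c-weighted sum of the increments
  |y^(s+1)|^2 - |y^s|^2 is at most c_j R. Abel summation and induction on j, using the
  monotonicity of c_s, then yield |y^(j+1)|^2 \<le> |y^0|^2 + R.
\<close>

section \<open>Power functions\<close>

lemma deriv_antimono_diff_bounds:
  fixes g g' :: "real \<Rightarrow> real"
  assumes "x \<le> y"
    and deriv: "\<And>z. x \<le> z \<Longrightarrow> z \<le> y \<Longrightarrow> (g has_real_derivative g' z) (at z)"
    and anti: "\<And>z. x \<le> z \<Longrightarrow> z \<le> y \<Longrightarrow> g' y \<le> g' z \<and> g' z \<le> g' x"
  shows "(y - x) * g' y \<le> g y - g x \<and> g y - g x \<le> (y - x) * g' x"
proof (cases "x = y")
  case False
  then obtain z where z: "x < z" "z < y" "g y - g x = (y - x) * g' z"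
    using MVT2[of x y g g'] deriv \<open>x \<le> y\<close> by force
  then show ?thesis using anti[of z] \<open>x \<le> y\<close> by (auto intro: mult_left_mono)
qed simp

lemma deriv_mono_diff_bounds:
  fixes g g' :: "real \<Rightarrow> real"
  assumes "x \<le> y"
    and "\<And>z. x \<le> z \<Longrightarrow> z \<le> y \<Longrightarrow> (g has_real_derivative g' z) (at z)"
    and "\<And>z. x \<le> z \<Longrightarrow> z \<le> y \<Longrightarrow> g' x \<le> g' z \<and> g' z \<le> g' y"
  shows "(y - x) * g' x \<le> g y - g x \<and> g y - g x \<le> (y - x) * g' y"
proof -
  have "(y - x) * - g' y \<le> - g y - - g x \<and> - g y - - g x \<le> (y - x) * - g' x"
    by (rule deriv_antimono_diff_bounds) (use assms in \<open>auto intro: DERIV_minus\<close>)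
  then show ?thesis by (simp add: algebra_simps)
qed

definition powF :: "real \<Rightarrow> real \<Rightarrow> real" where
  "powF \<alpha> x = x powr (1 - \<alpha>)"

definition powG :: "real \<Rightarrow> real \<Rightarrow> real" where
  "powG \<alpha> x = x powr (2 - \<alpha>) / (2 - \<alpha>)"

definition dpowF :: "real \<Rightarrow> real \<Rightarrow> real" where
  "dpowF \<alpha> x = (1 - \<alpha>) * x powr (- \<alpha>)"

definition ddpowF :: "real \<Rightarrow> real \<Rightarrow> real" where
  "ddpowF \<alpha> x = (1 - \<alpha>) * (- \<alpha>) * x powr (- \<alpha> - 1)"

lemma powF_has_real_derivative [derivative_intros]:
  "(g has_real_derivative g') (at z) \<Longrightarrow> 0 < g z \<Longrightarrow>
    ((\<lambda>z. powF \<alpha> (g z)) has_real_derivative dpowF \<alpha> (g z) * g') (at z)"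
  unfolding powF_def dpowF_def using DERIV_fun_powr[of g g' z "1 - \<alpha>"] by simp

lemma powG_has_real_derivative [derivative_intros]:
  "(g has_real_derivative g') (at z) \<Longrightarrow> 0 < g z \<Longrightarrow> \<alpha> < 2 \<Longrightarrow>
    ((\<lambda>z. powG \<alpha> (g z)) has_real_derivative powF \<alpha> (g z) * g') (at z)"
  unfolding powG_def powF_def
  using DERIV_cdivide[OF DERIV_fun_powr[of g g' z "2 - \<alpha>"], of "2 - \<alpha>"] by simp

lemma dpowF_has_real_derivative:
  "0 < x \<Longrightarrow> (dpowF \<alpha> has_real_derivative ddpowF \<alpha> x) (at x)"
  unfolding dpowF_def[abs_def] ddpowF_def
  using DERIV_cmult[OF has_real_derivative_powr, of x "1 - \<alpha>" "- \<alpha>"] by (simp add: mult.assoc)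

lemma powF_mono: "0 \<le> x \<Longrightarrow> x \<le> y \<Longrightarrow> \<alpha> < 1 \<Longrightarrow> powF \<alpha> x \<le> powF \<alpha> y"
  unfolding powF_def by (intro powr_mono2) auto

lemma dpowF_antimono: "0 < x \<Longrightarrow> x \<le> y \<Longrightarrow> 0 \<le> \<alpha> \<Longrightarrow> \<alpha> \<le> 1 \<Longrightarrow> dpowF \<alpha> y \<le> dpowF \<alpha> x"
  unfolding dpowF_def by (intro mult_left_mono powr_mono2') auto

lemma ddpowF_mono: "0 < x \<Longrightarrow> x \<le> y \<Longrightarrow> 0 < \<alpha> \<Longrightarrow> \<alpha> < 1 \<Longrightarrow> ddpowF \<alpha> x \<le> ddpowF \<alpha> y"
  unfolding ddpowF_def by (intro mult_left_mono_neg powr_mono2') (auto simp: mult_nonneg_nonpos)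

lemma powF_eq: "0 < x \<Longrightarrow> powF \<alpha> x = x * x powr (- \<alpha>)"
  using powr_add[of x 1 "- \<alpha>"] by (simp add: powF_def)

lemma powG_eq: "0 < x \<Longrightarrow> powG \<alpha> x = x * powF \<alpha> x / (2 - \<alpha>)"
  using powr_add[of x 1 "1 - \<alpha>"] by (simp add: powG_def powF_def)

lemma powF_diff_bounds:
  assumes "0 < x" "x \<le> y" "0 \<le> \<alpha>" "\<alpha> \<le> 1"
  shows "(y - x) * dpowF \<alpha> y \<le> powF \<alpha> y - powF \<alpha> x \<and> powF \<alpha> y - powF \<alpha> x \<le> (y - x) * dpowF \<alpha> x"
  using assms by (intro deriv_antimono_diff_bounds)
    (auto intro: dpowF_antimono powF_has_real_derivative[OF DERIV_ident, simplified])

lemma powG_diff_le: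
  assumes "0 < x" "x \<le> y" "\<alpha> < 1"
  shows "powG \<alpha> y - powG \<alpha> x \<le> (y - x) * powF \<alpha> y"
proof -
  have "(y - x) * powF \<alpha> x \<le> powG \<alpha> y - powG \<alpha> x \<and> powG \<alpha> y - powG \<alpha> x \<le> (y - x) * powF \<alpha> y"
    using assms by (intro deriv_mono_diff_bounds)
      (auto intro: powF_mono powG_has_real_derivative[OF DERIV_ident, simplified])
  then show ?thesis ..
qed

lemma dpowF_diff_bounds:
  assumes "0 < x" "x \<le> y" "0 < \<alpha>" "\<alpha> < 1"
  shows "(y - x) * ddpowF \<alpha> x \<le> dpowF \<alpha> y - dpowF \<alpha> x \<and> dpowF \<alpha> y - dpowF \<alpha> x \<le> (y - x) * ddpowF \<alpha> y"
  using assms by (intro deriv_mono_diff_bounds) (auto intro: ddpowF_mono dpowF_has_real_derivative)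

section \<open>The coefficients of the discrete fractional derivative\<close>

lemma frac_a_eq:
  "frac_a \<alpha> \<sigma> n = (if n = 0 then powF \<alpha> \<sigma> else powF \<alpha> (real n + \<sigma>) - powF \<alpha> (real n + \<sigma> - 1))"
  by (simp add: frac_a_def powF_def algebra_simps)

lemma frac_b_eq:
  "frac_b \<alpha> \<sigma> n = powG \<alpha> (real n + \<sigma>) - powG \<alpha> (real n + \<sigma> - 1)
     - (powF \<alpha> (real n + \<sigma>) + powF \<alpha> (real n + \<sigma> - 1)) / 2"
  by (simp add: frac_b_def powF_def powG_def algebra_simps diff_divide_distrib)

definition cmid :: "real \<Rightarrow> real \<Rightarrow> real" where
  "cmid \<alpha> x = powF \<alpha> x - powF \<alpha> (x - 1) + powG \<alpha> (x + 1) - 2 * powG \<alpha> x + powG \<alpha> (x - 1)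
     - powF \<alpha> (x + 1) / 2 + powF \<alpha> (x - 1) / 2"

definition clast :: "real \<Rightarrow> real \<Rightarrow> real" where
  "clast \<alpha> x = 3 / 2 * powF \<alpha> x - powF \<alpha> (x - 1) / 2 - powG \<alpha> x + powG \<alpha> (x - 1)"

lemma frac_c_mid: "1 \<le> m \<Longrightarrow> m < j \<Longrightarrow> frac_c \<alpha> \<sigma> j m = cmid \<alpha> (real m + \<sigma>)"
  unfolding frac_c_def cmid_def frac_a_eq frac_b_eq by (simp add: field_simps)

lemma frac_c_last: "1 \<le> j \<Longrightarrow> frac_c \<alpha> \<sigma> j j = clast \<alpha> (real j + \<sigma>)"
  unfolding frac_c_def clast_def frac_a_eq frac_b_eq by (simp add: field_simps)

lemma frac_c_first:
  "1 \<le> j \<Longrightarrow> frac_c \<alpha> \<sigma> j 0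
     = powF \<alpha> \<sigma> + powG \<alpha> (1 + \<sigma>) - powG \<alpha> \<sigma> - (powF \<alpha> (1 + \<sigma>) + powF \<alpha> \<sigma>) / 2"
  unfolding frac_c_def frac_a_eq frac_b_eq by (simp add: algebra_simps)

lemma cmid_antimono:
  assumes "1 < x" "x \<le> y" "0 < \<alpha>" "\<alpha> < 1"
  shows "cmid \<alpha> y \<le> cmid \<alpha> x"
proof (rule deriv_nonpos_imp_antimono[of x y "cmid \<alpha>"])
  fix z assume z: "z \<in> {x..y}"
  show "(cmid \<alpha> has_real_derivative
      dpowF \<alpha> z - dpowF \<alpha> (z - 1) + powF \<alpha> (z + 1) - 2 * powF \<alpha> z + powF \<alpha> (z - 1)
      - dpowF \<alpha> (z + 1) / 2 + dpowF \<alpha> (z - 1) / 2) (at z)"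
    unfolding cmid_def[abs_def] using z assms by (auto intro!: derivative_eq_intros)
  \<comment> \<open>concavity of powF and convexity of dpowF on the two unit intervals around z\<close>
  have "powF \<alpha> (z + 1) - powF \<alpha> z \<le> dpowF \<alpha> z" "dpowF \<alpha> z \<le> powF \<alpha> z - powF \<alpha> (z - 1)"
    "ddpowF \<alpha> z \<le> dpowF \<alpha> (z + 1) - dpowF \<alpha> z" "dpowF \<alpha> z - dpowF \<alpha> (z - 1) \<le> ddpowF \<alpha> z"
    using powF_diff_bounds[of z "z + 1" \<alpha>] powF_diff_bounds[of "z - 1" z \<alpha>]
      dpowF_diff_bounds[of z "z + 1" \<alpha>] dpowF_diff_bounds[of "z - 1" z \<alpha>] z assms by auto
  then show "dpowF \<alpha> z - dpowF \<alpha> (z - 1) + powF \<alpha> (z + 1) - 2 * powF \<alpha> z + powF \<alpha> (z - 1)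
      - dpowF \<alpha> (z + 1) / 2 + dpowF \<alpha> (z - 1) / 2 \<le> 0"
    by linarith
qed (use assms in auto)

lemma powF_extrapolation_minus_mean_ge:
  assumes "1 < x" "0 < \<alpha>" "\<alpha> < 1"
  shows "dpowF \<alpha> x \<le> 3 / 2 * powF \<alpha> x - powF \<alpha> (x - 1) / 2 - (powG \<alpha> x - powG \<alpha> (x - 1))"
proof -
  let ?g = "\<lambda>r. (r - x + 3 / 2) * powF \<alpha> r - powG \<alpha> r - ((r - x + 1)\<^sup>2 / 2 + (r - x + 1) / 2) * dpowF \<alpha> x"
  have "?g (x - 1) \<le> ?g x"
  proof (rule deriv_nonneg_imp_mono[of "x - 1" x ?g])
    fix r assume r: "r \<in> {x - 1..x}"
    show "(?g has_real_derivative (r - x + 3 / 2) * (dpowF \<alpha> r - dpowF \<alpha> x)) (at r)"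
      using assms r by (auto intro!: derivative_eq_intros simp: field_simps power2_eq_square)
    show "0 \<le> (r - x + 3 / 2) * (dpowF \<alpha> r - dpowF \<alpha> x)"
      using dpowF_antimono[of r x \<alpha>] assms r by simp
  qed simp
  then show ?thesis by (simp add: algebra_simps power2_eq_square)
qed

lemma powF_minus_mean_le:
  assumes "0 < x" "0 < \<alpha>" "\<alpha> < 1"
  shows "2 * (powF \<alpha> (x + 1) - (powG \<alpha> (x + 1) - powG \<alpha> x)) \<le> dpowF \<alpha> x"
proof -
  let ?g = "\<lambda>r. powG \<alpha> r - (r - x) * powF \<alpha> r + (r - x)\<^sup>2 / 2 * dpowF \<alpha> x"
  have "?g x \<le> ?g (x + 1)"
  proof (rule deriv_nonneg_imp_mono[of x "x + 1" ?g])
    fix r assume r: "r \<in> {x..x + 1}"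
    show "(?g has_real_derivative (r - x) * (dpowF \<alpha> x - dpowF \<alpha> r)) (at r)"
      using assms r by (auto intro!: derivative_eq_intros simp: field_simps power2_eq_square)
    show "0 \<le> (r - x) * (dpowF \<alpha> x - dpowF \<alpha> r)"
      using dpowF_antimono[of x r \<alpha>] assms r by simp
  qed simp
  then show ?thesis by (simp add: algebra_simps)
qed

lemma clast_le_cmid:
  assumes "1 < x" "0 < \<alpha>" "\<alpha> < 1"
  shows "clast \<alpha> (x + 1) \<le> cmid \<alpha> x"
  using powF_extrapolation_minus_mean_ge[OF assms] powF_minus_mean_le[of x \<alpha>] assms
  unfolding cmid_def clast_def by simp

lemma frac_c_zero_eq:
  assumes "0 < \<alpha>" "\<alpha> < 1" "\<sigma> = 1 - \<alpha> / 2" "1 \<le> j"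
  shows "frac_c \<alpha> \<sigma> j 0 = powF \<alpha> (1 + \<sigma>) / (2 * \<sigma>)"
proof -
  \<comment> \<open>for this choice of \<sigma>, 2 - \<alpha> = 2\<sigma> turns powG into a multiple of powF\<close>
  have "2 - \<alpha> = 2 * \<sigma>" "0 < \<sigma>" using assms by auto
  then have G: "powG \<alpha> \<sigma> = powF \<alpha> \<sigma> / 2"
      "powG \<alpha> (1 + \<sigma>) = (1 + \<sigma>) * powF \<alpha> (1 + \<sigma>) / (2 * \<sigma>)"
    using powG_eq[of \<sigma> \<alpha>] powG_eq[of "1 + \<sigma>" \<alpha>] by auto
  show ?thesis
    unfolding frac_c_first[OF assms(4)] G using \<open>0 < \<sigma>\<close> by (simp add: field_simps)
qed

lemma frac_c_zero_pos:
  assumes alpha: "0 < \<alpha>" "\<alpha> < 1" and sigma: "\<sigma> = 1 - \<alpha> / 2"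
  shows "0 < frac_c \<alpha> \<sigma> j 0"
proof (cases "j = 0")
  case True
  then show ?thesis using alpha sigma by (simp add: frac_c_def frac_a_def)
next
  case False
  then show ?thesis using frac_c_zero_eq[OF alpha sigma, of j] alpha sigma by (simp add: powF_def)
qed

lemma frac_c_one_eq:
  assumes "0 < \<alpha>" "\<alpha> < 1" "\<sigma> = 1 - \<alpha> / 2"
  shows "frac_c \<alpha> \<sigma> 1 1 = (2 * \<sigma> - 1) * powF \<alpha> (1 + \<sigma>) / (2 * \<sigma>)"
    and "2 \<le> j \<Longrightarrow> frac_c \<alpha> \<sigma> j 1 = (powF \<alpha> (2 + \<sigma>) - powF \<alpha> (1 + \<sigma>)) / \<sigma>"
proof -
  have "2 - \<alpha> = 2 * \<sigma>" "0 < \<sigma>" using assms by auto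
  then have G: "powG \<alpha> \<sigma> = powF \<alpha> \<sigma> / 2"
      "powG \<alpha> (1 + \<sigma>) = (1 + \<sigma>) * powF \<alpha> (1 + \<sigma>) / (2 * \<sigma>)"
      "powG \<alpha> (2 + \<sigma>) = (2 + \<sigma>) * powF \<alpha> (2 + \<sigma>) / (2 * \<sigma>)"
    using powG_eq[of \<sigma> \<alpha>] powG_eq[of "1 + \<sigma>" \<alpha>] powG_eq[of "2 + \<sigma>" \<alpha>] by auto
  show "frac_c \<alpha> \<sigma> 1 1 = (2 * \<sigma> - 1) * powF \<alpha> (1 + \<sigma>) / (2 * \<sigma>)"
    using frac_c_last[of 1 \<alpha> \<sigma>] G \<open>0 < \<sigma>\<close> by (simp add: clast_def field_simps)
  assume "2 \<le> j"
  moreover have "1 + \<sigma> + 1 = 2 + \<sigma>" by simp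
  ultimately show "frac_c \<alpha> \<sigma> j 1 = (powF \<alpha> (2 + \<sigma>) - powF \<alpha> (1 + \<sigma>)) / \<sigma>"
    using frac_c_mid[of 1 j \<alpha> \<sigma>] G \<open>0 < \<sigma>\<close> by (simp add: cmid_def field_simps)
qed

lemma frac_c_energy_condition:
  assumes alpha: "0 < \<alpha>" "\<alpha> < 1" and sigma: "\<sigma> = 1 - \<alpha> / 2" and j: "1 \<le> j"
  shows "\<sigma>\<^sup>2 * frac_c \<alpha> \<sigma> j 1 \<le> (2 * \<sigma> - 1) * frac_c \<alpha> \<sigma> j 0"
proof -
  define B where "B = powF \<alpha> (1 + \<sigma>)"
  have s: "1 / 2 < \<sigma>" "\<sigma> < 1" "1 - \<alpha> = 2 * \<sigma> - 1" using alpha sigma by auto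
  have B: "B = (1 + \<sigma>) * (1 + \<sigma>) powr (- \<alpha>)" "0 < B"
    using powF_eq[of "1 + \<sigma>" \<alpha>] s by (simp_all add: B_def)
  have c0: "frac_c \<alpha> \<sigma> j 0 = B / (2 * \<sigma>)"
    using frac_c_zero_eq[OF alpha sigma j] by (simp add: B_def)
  show ?thesis
  proof (cases "j = 1")
    case True
    have "\<sigma>\<^sup>2 * ((2 * \<sigma> - 1) * B / (2 * \<sigma>)) \<le> 1 * ((2 * \<sigma> - 1) * B / (2 * \<sigma>))"
      using s B by (intro mult_right_mono) (auto simp: power_le_one)
    then show ?thesis using True c0 frac_c_one_eq(1)[OF alpha sigma] by (simp add: B_def)
  next
    case False
    define P where "P = (1 + \<sigma>) powr (- \<alpha>)"
    have "powF \<alpha> (2 + \<sigma>) - B \<le> (2 * \<sigma> - 1) * P"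
      using powF_diff_bounds[of "1 + \<sigma>" "2 + \<sigma>" \<alpha>] s alpha by (simp add: B_def P_def dpowF_def)
    then have "\<sigma> * (powF \<alpha> (2 + \<sigma>) - B) \<le> \<sigma> * ((2 * \<sigma> - 1) * P)"
      using s by (intro mult_left_mono) auto
    also have "\<dots> = 2 * \<sigma>\<^sup>2 * ((2 * \<sigma> - 1) * P) / (2 * \<sigma>)"
      using s by (simp add: power2_eq_square)
    also have "\<dots> \<le> (1 + \<sigma>) * ((2 * \<sigma> - 1) * P) / (2 * \<sigma>)"
    proof -
      have "2 * \<sigma>\<^sup>2 \<le> 1 + \<sigma>"
        using mult_nonneg_nonneg[of "1 - \<sigma>" "1 + 2 * \<sigma>"] s by (simp add: algebra_simps power2_eq_square)
      moreover have "0 \<le> (2 * \<sigma> - 1) * P" using s by (simp add: P_def)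
      ultimately show ?thesis using s by (intro divide_right_mono mult_right_mono) auto
    qed
    also have "\<dots> = (2 * \<sigma> - 1) * B / (2 * \<sigma>)" using B by (simp add: P_def)
    finally have "\<sigma> * (powF \<alpha> (2 + \<sigma>) - B) \<le> (2 * \<sigma> - 1) * B / (2 * \<sigma>)" .
    then show ?thesis
      using False j c0 frac_c_one_eq(2)[OF alpha sigma, of j] s by (simp add: B_def power2_eq_square)
  qed
qed

lemma frac_c_last_ge:
  assumes alpha: "0 < \<alpha>" "\<alpha> < 1" and sigma: "\<sigma> = 1 - \<alpha> / 2"
  shows "(1 - \<alpha>) / (2 * (real j + \<sigma>) powr \<alpha>) \<le> frac_c \<alpha> \<sigma> j j"
proof (cases "j = 0")
  case True
  have "\<sigma> > 0" "(1 - \<alpha>) / 2 \<le> \<sigma>" using alpha sigma by auto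
  then have "(1 - \<alpha>) / 2 * \<sigma> powr (- \<alpha>) \<le> \<sigma> * \<sigma> powr (- \<alpha>)"
    by (intro mult_right_mono) auto
  then show ?thesis
    using True powF_eq[of \<sigma> \<alpha>] \<open>\<sigma> > 0\<close> by (simp add: frac_c_def frac_a_eq powr_minus_divide)
next
  case False
  define x where "x = real j + \<sigma>"
  have "1 < x" using False alpha sigma by (simp add: x_def)
  then have "powG \<alpha> x - powG \<alpha> (x - 1) \<le> powF \<alpha> x" "dpowF \<alpha> x \<le> powF \<alpha> x - powF \<alpha> (x - 1)"
    using powG_diff_le[of "x - 1" x \<alpha>] powF_diff_bounds[of "x - 1" x \<alpha>] alpha by auto
  then have "dpowF \<alpha> x / 2 \<le> clast \<alpha> x" unfolding clast_def by simp
  then show ?thesis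
    using frac_c_last[of j \<alpha> \<sigma>] False by (simp add: x_def dpowF_def powr_minus_divide)
qed

lemma frac_c_last_pos:
  assumes alpha: "0 < \<alpha>" "\<alpha> < 1" and sigma: "\<sigma> = 1 - \<alpha> / 2"
  shows "0 < frac_c \<alpha> \<sigma> j j"
  using frac_c_last_ge[OF assms, of j] alpha sigma by (simp add: order_less_le_trans[rotated])

lemma frac_c_antimono:
  assumes alpha: "0 < \<alpha>" "\<alpha> < 1" and sigma: "\<sigma> = 1 - \<alpha> / 2" and "m + 1 \<le> j"
  shows "frac_c \<alpha> \<sigma> j (m + 1) \<le> frac_c \<alpha> \<sigma> j m"
proof -
  have "\<sigma> > 1 / 2" using alpha sigma by simp
  consider "m = 0" | "1 \<le> m" "m + 1 < j" | "1 \<le> m" "m + 1 = j" using assms(4) by linarith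
  then show ?thesis
  proof cases
    case 1
    have c0: "0 \<le> frac_c \<alpha> \<sigma> j 0" using frac_c_zero_pos[OF alpha sigma] by (rule less_imp_le)
    have "2 * \<sigma> - 1 \<le> \<sigma>\<^sup>2" using zero_le_power2[of "\<sigma> - 1"] by (simp add: algebra_simps power2_eq_square)
    then have "\<sigma>\<^sup>2 * frac_c \<alpha> \<sigma> j 1 \<le> \<sigma>\<^sup>2 * frac_c \<alpha> \<sigma> j 0"
      using frac_c_energy_condition[OF alpha sigma, of j] assms(4) 1 mult_right_mono[OF _ c0] by force
    then show ?thesis using 1 \<open>\<sigma> > 1 / 2\<close> by simp
  next
    case 2
    then show ?thesis
      using frac_c_mid[of m j \<alpha> \<sigma>] frac_c_mid[of "m + 1" j \<alpha> \<sigma>] cmid_antimono[of "real m + \<sigma>" "real m + \<sigma> + 1" \<alpha>]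
        alpha \<open>\<sigma> > 1 / 2\<close> by (simp add: add.commute add.left_commute)
  next
    case 3
    then have j: "real j + \<sigma> = real m + \<sigma> + 1" by simp
    show ?thesis
      using 3 frac_c_mid[of m j \<alpha> \<sigma>] frac_c_last[of j \<alpha> \<sigma>] clast_le_cmid[of "real m + \<sigma>" \<alpha>]
        alpha \<open>\<sigma> > 1 / 2\<close> unfolding j by simp
  qed
qed

section \<open>The energy inequality\<close>

lemma abel_sum_lower_bound:
  fixes e \<phi> :: "nat \<Rightarrow> real"
  assumes "\<And>s. s < n \<Longrightarrow> e s \<le> e (Suc s)" and "\<And>s. 1 \<le> s \<Longrightarrow> s \<le> n \<Longrightarrow> m \<le> \<phi> s"
  shows "e n * (m - \<phi> (Suc n)) + e 0 * (\<phi> 0 - m) \<le> (\<Sum>s=0..n. e s * (\<phi> s - \<phi> (Suc s)))"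
  using assms
proof (induction n)
  case (Suc n)
  have "e n * (m - \<phi> (Suc n)) + e 0 * (\<phi> 0 - m) \<le> (\<Sum>s=0..n. e s * (\<phi> s - \<phi> (Suc s)))"
    using Suc.prems by (intro Suc.IH) auto
  moreover have "0 \<le> (e (Suc n) - e n) * (\<phi> (Suc n) - m)"
    using Suc.prems by (intro mult_nonneg_nonneg) auto
  ultimately show ?case by (simp add: algebra_simps)
qed (simp add: algebra_simps)

lemma sigma_energy_inequality:
  fixes e v :: "nat \<Rightarrow> real"
  assumes \<sigma>: "1 / 2 \<le> \<sigma>" and e0: "0 \<le> e 0"
    and mono: "\<And>s. s + 1 < j \<Longrightarrow> e s \<le> e (s + 1)"
    and energy_condition: "1 \<le> j \<Longrightarrow> \<sigma>\<^sup>2 * e (j - 1) \<le> (2 * \<sigma> - 1) * e j"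
  shows "1 / 2 * (\<Sum>s=0..j. e s * ((v (s + 1))\<^sup>2 - (v s)\<^sup>2))
      \<le> (\<sigma> * v (j + 1) + (1 - \<sigma>) * v j) * (\<Sum>s=0..j. e s * (v (s + 1) - v s))"
proof -
  define z where "z = \<sigma> * (v (j + 1) - v j)"
  define \<phi> where "\<phi> s = (v j - v s)\<^sup>2 / 2 + z * (v j - v s)" for s
  \<comment> \<open>the difference of the two sides is an Abel sum of the quadratic \<phi>, which is bounded below by -z^2/2\<close>
  have "(\<sigma> * v (j + 1) + (1 - \<sigma>) * v j) * (\<Sum>s=0..j. e s * (v (s + 1) - v s))
      - 1 / 2 * (\<Sum>s=0..j. e s * ((v (s + 1))\<^sup>2 - (v s)\<^sup>2)) = (\<Sum>s=0..j. e s * (\<phi> s - \<phi> (s + 1)))"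
    unfolding sum_distrib_left sum_subtractf[symmetric]
    by (rule sum.cong) (simp_all add: \<phi>_def z_def field_simps power2_eq_square)
  moreover have last: "e j * (\<phi> j - \<phi> (j + 1)) = e j * (\<sigma> - 1 / 2) * (v (j + 1) - v j)\<^sup>2"
    by (simp add: \<phi>_def z_def field_simps power2_eq_square)
  moreover have "0 \<le> (\<Sum>s=0..j. e s * (\<phi> s - \<phi> (s + 1)))"
  proof (cases j)
    case 0
    have "0 \<le> e j * (\<sigma> - 1 / 2) * (v (j + 1) - v j)\<^sup>2" using e0 \<sigma> 0 by simp
    then show ?thesis unfolding last[symmetric] using 0 by simp
  next
    case (Suc n)
    have \<phi>_ge: "- z\<^sup>2 / 2 \<le> \<phi> s" for s
      using zero_le_power2[of "v j - v s + z"] by (simp add: \<phi>_def field_simps power2_eq_square)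
    have "e n * (- z\<^sup>2 / 2 - \<phi> (Suc n)) + e 0 * (\<phi> 0 + z\<^sup>2 / 2) \<le> (\<Sum>s=0..n. e s * (\<phi> s - \<phi> (Suc s)))"
      using abel_sum_lower_bound[of n e "- z\<^sup>2 / 2" \<phi>] mono \<phi>_ge Suc by simp
    moreover have "0 \<le> e 0 * (\<phi> 0 + z\<^sup>2 / 2)" using e0 \<phi>_ge[of 0] by simp
    moreover have "0 \<le> e n * (- z\<^sup>2 / 2 - \<phi> (Suc n)) + e j * (\<sigma> - 1 / 2) * (v (j + 1) - v j)\<^sup>2"
    proof -
      have "0 \<le> ((2 * \<sigma> - 1) * e j - \<sigma>\<^sup>2 * e n) * (v (j + 1) - v j)\<^sup>2 / 2"
        using energy_condition Suc by simp
      moreover have "\<phi> (Suc n) = 0" using Suc by (simp add: \<phi>_def)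
      ultimately show ?thesis by (simp add: z_def field_simps power2_eq_square)
    qed
    moreover have "(\<Sum>s=0..j. e s * (\<phi> s - \<phi> (s + 1)))
        = (\<Sum>s=0..n. e s * (\<phi> s - \<phi> (Suc s))) + e j * (\<phi> j - \<phi> (j + 1))"
      using Suc by simp
    ultimately show ?thesis using last by linarith
  qed
  ultimately show ?thesis by simp
qed

lemma frac_c_energy_inequality:
  fixes v :: "nat \<Rightarrow> real"
  assumes alpha: "0 < \<alpha>" "\<alpha> < 1" and sigma: "\<sigma> = 1 - \<alpha> / 2"
  shows "1 / 2 * (\<Sum>s=0..j. frac_c \<alpha> \<sigma> j (j - s) * ((v (s + 1))\<^sup>2 - (v s)\<^sup>2))
      \<le> (\<sigma> * v (j + 1) + (1 - \<sigma>) * v j) * (\<Sum>s=0..j. frac_c \<alpha> \<sigma> j (j - s) * (v (s + 1) - v s))"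
proof (rule sigma_energy_inequality)
  show "1 / 2 \<le> \<sigma>" using alpha sigma by simp
  show "0 \<le> frac_c \<alpha> \<sigma> j (j - 0)" using frac_c_last_pos[OF alpha sigma, of j] by simp
  show "frac_c \<alpha> \<sigma> j (j - s) \<le> frac_c \<alpha> \<sigma> j (j - (s + 1))" if "s + 1 < j" for s
    using frac_c_antimono[OF alpha sigma, of "j - (s + 1)" j] that by (simp add: Suc_diff_Suc)
  show "\<sigma>\<^sup>2 * frac_c \<alpha> \<sigma> j (j - (j - 1)) \<le> (2 * \<sigma> - 1) * frac_c \<alpha> \<sigma> j (j - j)" if "1 \<le> j"
    using frac_c_energy_condition[OF alpha sigma that] that by simp
qed

lemma frac_deriv_eq:
  "0 < \<tau> \<Longrightarrow> frac_deriv \<alpha> \<sigma> \<tau> y j i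
     = 1 / (\<tau> powr \<alpha> * Gamma (2 - \<alpha>)) * (\<Sum>s=0..j. frac_c \<alpha> \<sigma> j (j - s) * (y (s + 1) i - y s i))"
  unfolding frac_deriv_def sum_divide_distrib[symmetric]
  by (simp add: powr_diff powr_minus_divide field_simps)

section \<open>The spatial operator\<close>

lemma sum_by_parts:
  fixes w g :: "nat \<Rightarrow> real"
  shows "(\<Sum>i=1..n. w i * (g i - g (i - 1))) = w n * g n - w 0 * g 0 - (\<Sum>i<n. g i * (w (Suc i) - w i))"
  by (induction n) (simp_all add: algebra_simps)

lemma Lambda_op_energy:
  fixes a d w :: "nat \<Rightarrow> real"
  assumes "1 \<le> N" "w 0 = 0" "w N = 0" "0 < h"
    and a_ge: "\<And>i. 1 \<le> i \<Longrightarrow> i \<le> N \<Longrightarrow> c \<le> a i"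
    and d_ge: "\<And>i. 1 \<le> i \<Longrightarrow> i < N \<Longrightarrow> 0 \<le> d i"
  shows "(\<Sum>i=1..N-1. w i * Lambda_op h a d w i) \<le> - c * (\<Sum>i<N. (w (Suc i) - w i)\<^sup>2) / h\<^sup>2"
proof -
  define g where "g i = a (Suc i) * (w (Suc i) - w i)" for i
  have "w i * Lambda_op h a d w i = w i * (g i - g (i - 1)) / h\<^sup>2 - d i * (w i)\<^sup>2" if "1 \<le> i" for i
    using that by (simp add: Lambda_op_def g_def field_simps power2_eq_square)
  then have "(\<Sum>i=1..N-1. w i * Lambda_op h a d w i)
      = (\<Sum>i=1..N-1. w i * (g i - g (i - 1))) / h\<^sup>2 - (\<Sum>i=1..N-1. d i * (w i)\<^sup>2)"
    by (simp add: sum_subtractf sum_divide_distrib)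
  also have "(\<Sum>i=1..N-1. w i * (g i - g (i - 1))) = - (\<Sum>i<N. a (Suc i) * (w (Suc i) - w i)\<^sup>2)"
    using sum_by_parts[of w g "N - 1"] \<open>1 \<le> N\<close> \<open>w 0 = 0\<close> \<open>w N = 0\<close>
      lessThan_Suc[of "N - 1"]
    by (simp add: g_def power2_eq_square algebra_simps)
  also have "- (\<Sum>i<N. a (Suc i) * (w (Suc i) - w i)\<^sup>2) / h\<^sup>2 - (\<Sum>i=1..N-1. d i * (w i)\<^sup>2)
      \<le> - (\<Sum>i<N. c * (w (Suc i) - w i)\<^sup>2) / h\<^sup>2"
  proof -
    have "(\<Sum>i<N. c * (w (Suc i) - w i)\<^sup>2) \<le> (\<Sum>i<N. a (Suc i) * (w (Suc i) - w i)\<^sup>2)"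
      using a_ge by (intro sum_mono mult_right_mono) auto
    then have "(\<Sum>i<N. c * (w (Suc i) - w i)\<^sup>2) / h\<^sup>2 \<le> (\<Sum>i<N. a (Suc i) * (w (Suc i) - w i)\<^sup>2) / h\<^sup>2"
      by (rule divide_right_mono) simp
    moreover have "0 \<le> (\<Sum>i=1..N-1. d i * (w i)\<^sup>2)" using d_ge by (intro sum_nonneg) auto
    ultimately show ?thesis by linarith
  qed
  also have "\<dots> = - c * (\<Sum>i<N. (w (Suc i) - w i)\<^sup>2) / h\<^sup>2" by (simp add: sum_distrib_left[symmetric])
  finally show ?thesis .
qed

lemma discrete_poincare_pointwise:
  fixes w :: "nat \<Rightarrow> real"
  assumes "w 0 = 0" "w N = 0" "i \<le> N"
  shows "real N * (w i)\<^sup>2 \<le> real i * real (N - i) * (\<Sum>k<N. (w (Suc k) - w k)\<^sup>2)"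
proof -
  define A where "A = (\<Sum>k<i. (w (Suc k) - w k)\<^sup>2)"
  define B where "B = (\<Sum>k=i..<N. (w (Suc k) - w k)\<^sup>2)"
  \<comment> \<open>w i is the sum of the increments to its left and minus the sum of those to its right\<close>
  have "(w i)\<^sup>2 \<le> A * real i"
    using sum_squared_le_sum_of_squares[of "\<lambda>k. w (Suc k) - w k" "{..<i}"] assms
    by (simp add: A_def sum_lessThan_telescope)
  moreover have "(w i)\<^sup>2 \<le> B * real (N - i)"
    using sum_squared_le_sum_of_squares[of "\<lambda>k. w (Suc k) - w k" "{i..<N}"] assms
    by (simp add: B_def sum_Suc_diff')
  ultimately have "real (N - i) * (w i)\<^sup>2 + real i * (w i)\<^sup>2
      \<le> real (N - i) * (A * real i) + real i * (B * real (N - i))"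
    by (intro add_mono mult_left_mono) auto
  moreover have "(\<Sum>k<N. (w (Suc k) - w k)\<^sup>2) = A + B"
    using sum.atLeastLessThan_concat[of 0 i N "\<lambda>k. (w (Suc k) - w k)\<^sup>2"] assms(3)
    by (simp add: A_def B_def lessThan_atLeast0)
  ultimately show ?thesis using assms(3) by (simp add: of_nat_diff algebra_simps)
qed

lemma discrete_poincare:
  fixes w :: "nat \<Rightarrow> real"
  assumes "w 0 = 0" "w N = 0"
  shows "(\<Sum>i=1..N-1. (w i)\<^sup>2) \<le> (real N)\<^sup>2 / 4 * (\<Sum>k<N. (w (Suc k) - w k)\<^sup>2)"
proof -
  define D where "D = (\<Sum>k<N. (w (Suc k) - w k)\<^sup>2)"
  have "0 \<le> D" unfolding D_def by (intro sum_nonneg) auto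
  have "(w i)\<^sup>2 \<le> real N / 4 * D" if "1 \<le> i" "i \<le> N - 1" for i
  proof -
    have "real i * real (N - i) \<le> (real N)\<^sup>2 / 4"
      using zero_le_power2[of "real N - 2 * real i"] that by (simp add: of_nat_diff algebra_simps power2_eq_square)
    then have "real N * (w i)\<^sup>2 \<le> real N * (real N / 4 * D)"
      using discrete_poincare_pointwise[OF assms, of i] mult_right_mono[OF _ \<open>0 \<le> D\<close>] that
      by (fastforce simp: D_def power2_eq_square)
    moreover have "0 < real N" using that by simp
    ultimately show ?thesis by (rule mult_left_le_imp_le)
  qed
  then have "(\<Sum>i=1..N-1. (w i)\<^sup>2) \<le> real (N - 1) * (real N / 4 * D)"
    using sum_mono[of "{1..N-1}" "\<lambda>i. (w i)\<^sup>2" "\<lambda>_. real N / 4 * D"] by simp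
  also have "\<dots> \<le> real N * (real N / 4 * D)" using \<open>0 \<le> D\<close> by (intro mult_right_mono) auto
  finally show ?thesis by (simp add: D_def power2_eq_square)
qed

lemma grid_norm0_sq_nonneg: "0 \<le> h \<Longrightarrow> 0 \<le> grid_norm0_sq N h v"
  unfolding grid_norm0_sq_def grid_inner_def by (intro sum_nonneg) simp

lemma grid_inner_add_right:
  "grid_inner N h w (\<lambda>i. u i + v i) = grid_inner N h w u + grid_inner N h w v"
  by (simp add: grid_inner_def sum.distrib algebra_simps)

lemma grid_inner_young:
  assumes "0 \<le> h" "0 < \<epsilon>"
  shows "grid_inner N h w v \<le> \<epsilon> * grid_norm0_sq N h w + grid_norm0_sq N h v / (4 * \<epsilon>)"
proof -
  have "w i * v i * h \<le> \<epsilon> * (w i * w i * h) + v i * v i * h / (4 * \<epsilon>)" for i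
  proof -
    have "0 \<le> (2 * \<epsilon> * w i - v i)\<^sup>2 / (4 * \<epsilon>) * h" using assms by simp
    then show ?thesis using assms by (simp add: field_simps power2_eq_square)
  qed
  then show ?thesis
    unfolding grid_norm0_sq_def grid_inner_def sum_distrib_left sum_divide_distrib sum.distrib[symmetric]
    by (intro sum_mono) auto
qed

lemma grid_inner_Lambda_le:
  assumes "1 \<le> N" "w 0 = 0" "w N = 0" "0 < h" "0 \<le> c"
    and "\<And>i. 1 \<le> i \<Longrightarrow> i \<le> N \<Longrightarrow> c \<le> a i"
    and "\<And>i. 1 \<le> i \<Longrightarrow> i < N \<Longrightarrow> 0 \<le> d i"
  shows "grid_inner N h w (Lambda_op h a d w) \<le> - (4 * c / (real N * h)\<^sup>2) * grid_norm0_sq N h w"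
proof -
  define D where "D = (\<Sum>k<N. (w (Suc k) - w k)\<^sup>2)"
  have "grid_inner N h w (Lambda_op h a d w) = h * (\<Sum>i=1..N-1. w i * Lambda_op h a d w i)"
    by (simp add: grid_inner_def sum_distrib_left algebra_simps)
  also have "\<dots> \<le> h * (- c * D / h\<^sup>2)"
    using Lambda_op_energy[of N w h c a d] assms unfolding D_def by (intro mult_left_mono) auto
  also have "\<dots> = - (4 * c / (real N * h)\<^sup>2) * (h * ((real N)\<^sup>2 / 4 * D))"
    using assms by (simp add: field_simps power2_eq_square)
  also have "\<dots> \<le> - (4 * c / (real N * h)\<^sup>2) * (h * (\<Sum>i=1..N-1. (w i)\<^sup>2))"
    using discrete_poincare[of w N] assms by (intro mult_left_mono_neg mult_left_mono) (auto simp: D_def)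
  also have "\<dots> = - (4 * c / (real N * h)\<^sup>2) * grid_norm0_sq N h w"
    by (simp add: grid_norm0_sq_def grid_inner_def sum_distrib_left power2_eq_square algebra_simps)
  finally show ?thesis .
qed

lemma grid_inner_Lambda_forcing_le:
  assumes "1 \<le> N" "w 0 = 0" "w N = 0" "0 < h" "0 < c"
    and "\<And>i. 1 \<le> i \<Longrightarrow> i \<le> N \<Longrightarrow> c \<le> a i"
    and "\<And>i. 1 \<le> i \<Longrightarrow> i < N \<Longrightarrow> 0 \<le> d i"
  shows "grid_inner N h w (\<lambda>i. Lambda_op h a d w i + \<phi> i) \<le> (real N * h)\<^sup>2 / (16 * c) * grid_norm0_sq N h \<phi>"
proof -
  define \<epsilon> where "\<epsilon> = 4 * c / (real N * h)\<^sup>2"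
  have "0 < \<epsilon>" using assms by (simp add: \<epsilon>_def)
  have "grid_inner N h w (Lambda_op h a d w) \<le> - \<epsilon> * grid_norm0_sq N h w"
    using grid_inner_Lambda_le[of N w h c a d] assms by (simp add: \<epsilon>_def)
  moreover have "grid_inner N h w \<phi> \<le> \<epsilon> * grid_norm0_sq N h w + grid_norm0_sq N h \<phi> / (4 * \<epsilon>)"
    using grid_inner_young \<open>0 < h\<close> \<open>0 < \<epsilon>\<close> by simp
  moreover have "grid_norm0_sq N h \<phi> / (4 * \<epsilon>) = (real N * h)\<^sup>2 / (16 * c) * grid_norm0_sq N h \<phi>"
    using assms by (simp add: \<epsilon>_def)
  ultimately show ?thesis by (simp add: grid_inner_add_right)
qed

section \<open>Stability\<close>

lemma frac_scheme_level_estimate: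
  fixes y :: "nat \<Rightarrow> nat \<Rightarrow> real" and a d \<phi> :: "nat \<Rightarrow> real"
  assumes alpha: "0 < \<alpha>" "\<alpha> < 1" and sigma: "\<sigma> = 1 - \<alpha> / 2"
    and "1 \<le> N" "0 < h" "0 < \<tau>" "0 < c"
    and a_ge: "\<And>i. 1 \<le> i \<Longrightarrow> i \<le> N \<Longrightarrow> c \<le> a i"
    and d_ge: "\<And>i. 1 \<le> i \<Longrightarrow> i < N \<Longrightarrow> 0 \<le> d i"
    and bdry: "y j 0 = 0" "y j N = 0" "y (j + 1) 0 = 0" "y (j + 1) N = 0"
    and scheme: "\<And>i. 1 \<le> i \<Longrightarrow> i \<le> N - 1 \<Longrightarrow>
      frac_deriv \<alpha> \<sigma> \<tau> y j i = Lambda_op h a d (\<lambda>i. \<sigma> * y (j + 1) i + (1 - \<sigma>) * y j i) i + \<phi> i"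
  shows "(\<Sum>s=0..j. frac_c \<alpha> \<sigma> j (j - s) * (grid_norm0_sq N h (y (s + 1)) - grid_norm0_sq N h (y s)))
      \<le> \<tau> powr \<alpha> * Gamma (2 - \<alpha>) * (real N * h)\<^sup>2 / (8 * c) * grid_norm0_sq N h \<phi>"
proof -
  define W where "W i = \<sigma> * y (j + 1) i + (1 - \<sigma>) * y j i" for i
  define S where "S i = (\<Sum>s=0..j. frac_c \<alpha> \<sigma> j (j - s) * (y (s + 1) i - y s i))" for i
  define E where "E i = (\<Sum>s=0..j. frac_c \<alpha> \<sigma> j (j - s) * ((y (s + 1) i)\<^sup>2 - (y s i)\<^sup>2))" for i
  define \<kappa> where "\<kappa> = \<tau> powr \<alpha> * Gamma (2 - \<alpha>)"
  have "0 < \<kappa>" using \<open>0 < \<tau>\<close> alpha by (simp add: \<kappa>_def)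
  have "(\<Sum>s=0..j. frac_c \<alpha> \<sigma> j (j - s) * (grid_norm0_sq N h (y (s + 1)) - grid_norm0_sq N h (y s)))
      = (\<Sum>i=1..N-1. E i * h)"
    unfolding grid_norm0_sq_def grid_inner_def E_def sum_distrib_left sum_distrib_right
      sum_subtractf[symmetric]
    by (subst sum.swap) (simp add: algebra_simps power2_eq_square)
  also have "\<dots> \<le> (\<Sum>i=1..N-1. 2 * (W i * S i * h))"
  proof (rule sum_mono)
    fix i
    have "E i \<le> 2 * (W i * S i)"
      using frac_c_energy_inequality[OF alpha sigma, of j "\<lambda>s. y s i"] by (simp add: E_def S_def W_def)
    then show "E i * h \<le> 2 * (W i * S i * h)"
      using mult_right_mono[of "E i" "2 * (W i * S i)" h] \<open>0 < h\<close> by simp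
  qed
  also have "\<dots> = 2 * (\<kappa> * grid_inner N h W (\<lambda>i. Lambda_op h a d W i + \<phi> i))"
  proof -
    have "S i = \<kappa> * (Lambda_op h a d W i + \<phi> i)" if "i \<in> {1..N-1}" for i
      using scheme[of i] frac_deriv_eq[OF \<open>0 < \<tau>\<close>, of \<alpha> \<sigma> y j i] that \<open>0 < \<kappa>\<close>
      by (auto simp: S_def W_def[abs_def] \<kappa>_def[symmetric] field_simps)
    then show ?thesis unfolding grid_inner_def sum_distrib_left by (intro sum.cong) auto
  qed
  also have "\<dots> \<le> 2 * (\<kappa> * ((real N * h)\<^sup>2 / (16 * c) * grid_norm0_sq N h \<phi>))"
    using \<open>0 < \<kappa>\<close> by (intro mult_left_mono grid_inner_Lambda_forcing_le) (use assms in \<open>auto simp: W_def\<close>)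
  finally show ?thesis by (simp add: \<kappa>_def mult_ac)
qed

lemma Gamma_2_minus:
  fixes \<alpha> :: real
  assumes "\<alpha> < 1"
  shows "Gamma (2 - \<alpha>) = (1 - \<alpha>) * Gamma (1 - \<alpha>)"
proof -
  have "1 - \<alpha> \<notin> \<int>\<^sub>\<le>\<^sub>0" using assms by (auto elim!: nonpos_Ints_cases)
  then show ?thesis using Gamma_plus1[of "1 - \<alpha>"] by (simp add: algebra_simps)
qed

lemma frac_time_factor_le:
  assumes alpha: "0 < \<alpha>" "\<alpha> < 1" and sigma: "\<sigma> = 1 - \<alpha> / 2"
    and "0 < \<tau>" "(real j + \<sigma>) * \<tau> \<le> T"
  shows "\<tau> powr \<alpha> * Gamma (2 - \<alpha>) \<le> 2 * T powr \<alpha> * Gamma (1 - \<alpha>) * frac_c \<alpha> \<sigma> j j"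
proof -
  define x where "x = (real j + \<sigma>) powr \<alpha>"
  have "0 < x" "0 < Gamma (1 - \<alpha>)" using alpha sigma by (simp_all add: x_def)
  have "\<tau> powr \<alpha> * Gamma (2 - \<alpha>) = (1 - \<alpha>) / (2 * x) * (2 * (x * \<tau> powr \<alpha>) * Gamma (1 - \<alpha>))"
    using Gamma_2_minus[OF alpha(2)] \<open>0 < x\<close> by simp
  also have "\<dots> \<le> frac_c \<alpha> \<sigma> j j * (2 * (x * \<tau> powr \<alpha>) * Gamma (1 - \<alpha>))"
    using frac_c_last_ge[OF alpha sigma, of j] \<open>0 < x\<close> \<open>0 < Gamma (1 - \<alpha>)\<close> \<open>0 < \<tau>\<close>
    by (intro mult_right_mono) (simp_all add: x_def)
  also have "\<dots> \<le> frac_c \<alpha> \<sigma> j j * (2 * T powr \<alpha> * Gamma (1 - \<alpha>))"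
  proof -
    have "x * \<tau> powr \<alpha> = ((real j + \<sigma>) * \<tau>) powr \<alpha>"
      using alpha sigma \<open>0 < \<tau>\<close> by (simp add: x_def powr_mult)
    also have "\<dots> \<le> T powr \<alpha>" using assms by (intro powr_mono2) auto
    finally show ?thesis
      using frac_c_last_pos[OF alpha sigma, of j] \<open>0 < Gamma (1 - \<alpha>)\<close>
      by (intro mult_left_mono mult_right_mono) auto
  qed
  finally show ?thesis by (simp add: mult_ac)
qed

lemma sampled_scheme_level_estimate:
  fixes N M :: nat and k q f :: "real \<Rightarrow> real \<Rightarrow> real" and y :: "nat \<Rightarrow> nat \<Rightarrow> real"
  assumes alpha: "0 < \<alpha>" "\<alpha> < 1" and sigma: "\<sigma> = 1 - \<alpha> / 2"
    and "0 < l" "0 < T" "1 \<le> N" "0 < c1"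
    and k_ge: "\<And>x t. x \<in> {0..l} \<Longrightarrow> t \<in> {0..T} \<Longrightarrow> k x t \<ge> c1"
    and q_ge: "\<And>x t. x \<in> {0..l} \<Longrightarrow> t \<in> {0..T} \<Longrightarrow> q x t \<ge> 0"
    and scheme: "\<And>i j. 1 \<le> i \<Longrightarrow> i \<le> N - 1 \<Longrightarrow> j \<le> M - 1 \<Longrightarrow>
        frac_deriv \<alpha> \<sigma> (T / M) y j i =
          Lambda_op (l / N)
            (\<lambda>i'. k ((real i' - 1 / 2) * (l / N)) ((real j + \<sigma>) * (T / M)))
            (\<lambda>i'. q (real i' * (l / N)) ((real j + \<sigma>) * (T / M)))
            (\<lambda>i'. \<sigma> * y (j + 1) i' + (1 - \<sigma>) * y j i') i
          + f (real i * (l / N)) ((real j + \<sigma>) * (T / M))"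
    and bdry: "\<And>j. j \<le> M \<Longrightarrow> y j 0 = 0 \<and> y j N = 0"
    and "j < M"
    and forcing: "grid_norm0_sq N (l / N) (\<lambda>i. f (real i * (l / N)) ((real j + \<sigma>) * (T / M))) \<le> F"
  shows "(\<Sum>s=0..j. frac_c \<alpha> \<sigma> j (j - s) * (grid_norm0_sq N (l / N) (y (s + 1)) - grid_norm0_sq N (l / N) (y s)))
      \<le> frac_c \<alpha> \<sigma> j j * (l\<^sup>2 * T powr \<alpha> * Gamma (1 - \<alpha>) / (4 * c1) * F)"
proof -
  define h where "h = l / N"
  define \<tau> where "\<tau> = T / M"
  define t where "t = (real j + \<sigma>) * \<tau>"
  define \<Phi> where "\<Phi> = grid_norm0_sq N h (\<lambda>i. f (real i * h) t)"
  have "0 < h" "0 < \<tau>" "real N * h = l" using assms by (simp_all add: h_def \<tau>_def)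
  have "real j + \<sigma> \<le> real M" using \<open>j < M\<close> alpha sigma by linarith
  then have "(real j + \<sigma>) * \<tau> \<le> real M * \<tau>" using \<open>0 < \<tau>\<close> by (intro mult_right_mono) auto
  then have "t \<le> T" using \<open>j < M\<close> by (simp add: t_def \<tau>_def)
  moreover have "0 \<le> t" using \<open>0 < \<tau>\<close> alpha sigma by (simp add: t_def)
  ultimately have t: "t \<in> {0..T}" by simp
  have node: "real i * h \<in> {0..l}" "(real i - 1 / 2) * h \<in> {0..l}" if "1 \<le> i" "i \<le> N" for i
    using that \<open>0 < h\<close> mult_right_mono[of "real i" "real N" h] \<open>real N * h = l\<close> by auto
  have "(\<Sum>s=0..j. frac_c \<alpha> \<sigma> j (j - s) * (grid_norm0_sq N h (y (s + 1)) - grid_norm0_sq N h (y s)))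
      \<le> \<tau> powr \<alpha> * Gamma (2 - \<alpha>) * l\<^sup>2 / (8 * c1) * \<Phi>"
    unfolding \<Phi>_def \<open>real N * h = l\<close>[symmetric]
  proof (rule frac_scheme_level_estimate[OF alpha sigma])
    show "c1 \<le> k ((real i - 1 / 2) * h) t" if "1 \<le> i" "i \<le> N" for i using k_ge node that t by simp
    show "0 \<le> q (real i * h) t" if "1 \<le> i" "i < N" for i using q_ge node that t by simp
  qed (use assms \<open>0 < h\<close> \<open>0 < \<tau>\<close> in \<open>simp_all add: h_def \<tau>_def t_def\<close>)
  also have "\<dots> \<le> 2 * T powr \<alpha> * Gamma (1 - \<alpha>) * frac_c \<alpha> \<sigma> j j * l\<^sup>2 / (8 * c1) * F"
  proof (rule mult_mono)
    show "\<Phi> \<le> F" using forcing by (simp add: \<Phi>_def h_def \<tau>_def t_def)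
    show "\<tau> powr \<alpha> * Gamma (2 - \<alpha>) * l\<^sup>2 / (8 * c1) \<le> 2 * T powr \<alpha> * Gamma (1 - \<alpha>) * frac_c \<alpha> \<sigma> j j * l\<^sup>2 / (8 * c1)"
      using frac_time_factor_le[OF alpha sigma \<open>0 < \<tau>\<close>, of j T] t \<open>0 < c1\<close>
      by (intro mult_right_mono divide_right_mono) (auto simp: t_def)
    show "0 \<le> \<Phi>" using \<open>0 < h\<close> by (simp add: \<Phi>_def grid_norm0_sq_nonneg)
    show "0 \<le> 2 * T powr \<alpha> * Gamma (1 - \<alpha>) * frac_c \<alpha> \<sigma> j j * l\<^sup>2 / (8 * c1)"
      using frac_c_last_pos[OF alpha sigma, of j] alpha \<open>0 < c1\<close> Gamma_real_pos[of "1 - \<alpha>"] by simp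
  qed
  finally show ?thesis by (simp add: h_def power2_eq_square field_simps)
qed

lemma stability_from_level_estimates:
  fixes R :: real and v :: "nat \<Rightarrow> real" and e :: "nat \<Rightarrow> nat \<Rightarrow> real"
  assumes "0 \<le> R"
    and mono: "\<And>j s. j < M \<Longrightarrow> s < j \<Longrightarrow> e j s \<le> e j (Suc s)"
    and pos: "\<And>j. j < M \<Longrightarrow> 0 < e j j"
    and level: "\<And>j. j < M \<Longrightarrow> (\<Sum>s=0..j. e j s * (v (Suc s) - v s)) \<le> e j 0 * R"
  shows "j \<le> M \<Longrightarrow> v j \<le> v 0 + R"
proof (induction j rule: less_induct)
  case (less j)
  show ?case
  proof (cases j)
    case (Suc i)
    \<comment> \<open>Abel summation against the bound v s \<le> v 0 + R already known for s \<le> i\<close>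
    have "i < M" using less.prems Suc by simp
    have bound: "- (v 0 + R) \<le> - v s" if "1 \<le> s" "s \<le> i" for s
      using less.IH[of s] less.prems Suc that by simp
    have "e i i * (- (v 0 + R) - - v (Suc i)) + e i 0 * (- v 0 - - (v 0 + R))
        \<le> (\<Sum>s=0..i. e i s * (- v s - - v (Suc s)))"
      using abel_sum_lower_bound[of i "e i" "- (v 0 + R)" "\<lambda>s. - v s"] mono[OF \<open>i < M\<close>] bound
      by blast
    then have "e i i * (v (Suc i) - (v 0 + R)) \<le> 0"
      using level[of i] less.prems Suc by (simp add: algebra_simps)
    then show ?thesis using pos[of i] less.prems Suc by (simp add: mult_le_0_iff)
  qed (use \<open>0 \<le> R\<close> in simp)
qed

theorem theorem3:
  fixes \<alpha> \<sigma> l T c1 :: real and N M :: nat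
    and k q f :: "real \<Rightarrow> real \<Rightarrow> real" and u0 :: "real \<Rightarrow> real"
    and y :: "nat \<Rightarrow> nat \<Rightarrow> real"
  assumes alpha: "0 < \<alpha>" "\<alpha> < 1"
    and sigma: "\<sigma> = 1 - \<alpha> / 2"
    and lT: "l > 0" "T > 0"
    and NM: "N \<ge> 1" "M \<ge> 1"
    and c1: "c1 > 0"
    and k_cont: "continuous_on ({0..l} \<times> {0..T}) (\<lambda>(x, t). k x t)"
    and q_cont: "continuous_on ({0..l} \<times> {0..T}) (\<lambda>(x, t). q x t)"
    and f_cont: "continuous_on ({0..l} \<times> {0..T}) (\<lambda>(x, t). f x t)"
    and k_ge: "\<And>x t. x \<in> {0..l} \<Longrightarrow> t \<in> {0..T} \<Longrightarrow> k x t \<ge> c1"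
    and q_ge: "\<And>x t. x \<in> {0..l} \<Longrightarrow> t \<in> {0..T} \<Longrightarrow> q x t \<ge> 0"
    and scheme: "\<And>i j. 1 \<le> i \<Longrightarrow> i \<le> N - 1 \<Longrightarrow> j \<le> M - 1 \<Longrightarrow>
        frac_deriv \<alpha> \<sigma> (T / M) y j i =
          Lambda_op (l / N)
            (\<lambda>i'. k ((real i' - 1 / 2) * (l / N)) ((real j + \<sigma>) * (T / M)))
            (\<lambda>i'. q (real i' * (l / N)) ((real j + \<sigma>) * (T / M)))
            (\<lambda>i'. \<sigma> * y (j + 1) i' + (1 - \<sigma>) * y j i') i
          + f (real i * (l / N)) ((real j + \<sigma>) * (T / M))"
    and bdry: "\<And>j. j \<le> M \<Longrightarrow> y j 0 = 0 \<and> y j N = 0"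
    and init: "\<And>i. i \<le> N \<Longrightarrow> y 0 i = u0 (real i * (l / N))"
  shows "\<forall>j \<le> M - 1.
    grid_norm0_sq N (l / N) (y (j + 1)) \<le>
      grid_norm0_sq N (l / N) (y 0)
      + l^2 * T powr \<alpha> * Gamma (1 - \<alpha>) / (4 * c1) *
        Max ((\<lambda>j'. grid_norm0_sq N (l / N)
                 (\<lambda>i. f (real i * (l / N)) ((real j' - 1 + \<sigma>) * (T / M)))) ` {1..M})"
proof -
  \<comment> \<open>continuity of k, q, f and the initial data u0 play no role: only their values at the nodes enter\<close>
  define F where "F = Max ((\<lambda>j'. grid_norm0_sq N (l / N)
                 (\<lambda>i. f (real i * (l / N)) ((real j' - 1 + \<sigma>) * (T / M)))) ` {1..M})"
  define R where "R = l^2 * T powr \<alpha> * Gamma (1 - \<alpha>) / (4 * c1) * F"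
  define v where "v s = grid_norm0_sq N (l / N) (y s)" for s
  have forcing: "grid_norm0_sq N (l / N) (\<lambda>i. f (real i * (l / N)) ((real j + \<sigma>) * (T / M))) \<le> F"
    if "j < M" for j
    unfolding F_def using that by (intro Max_ge) (auto intro!: image_eqI[where x = "j + 1"])
  have "0 \<le> F" using order_trans[OF grid_norm0_sq_nonneg forcing[of 0]] NM lT by simp
  then have "0 \<le> R" using lT c1 Gamma_real_pos[of "1 - \<alpha>"] alpha by (simp add: R_def)
  have "v j \<le> v 0 + R" if "j \<le> M" for j
  proof (rule stability_from_level_estimates[of R M "\<lambda>j s. frac_c \<alpha> \<sigma> j (j - s)" v])
    show "frac_c \<alpha> \<sigma> j (j - s) \<le> frac_c \<alpha> \<sigma> j (j - Suc s)" if "s < j" for j s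
      using frac_c_antimono[OF alpha sigma, of "j - Suc s" j] that by (simp add: Suc_diff_Suc)
    show "(\<Sum>s=0..j. frac_c \<alpha> \<sigma> j (j - s) * (v (Suc s) - v s)) \<le> frac_c \<alpha> \<sigma> j (j - 0) * R"
      if "j < M" for j
      using sampled_scheme_level_estimate[OF alpha sigma lT NM(1) c1 k_ge q_ge scheme bdry that forcing[OF that]]
      by (simp add: v_def R_def)
  qed (use \<open>0 \<le> R\<close> that frac_c_zero_pos[OF alpha sigma] in auto)
  then show ?thesis using NM by (auto simp: v_def R_def F_def)
qed

end
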